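(* Let $(X,\perp,Y,T)$ be a Heyting frame. Then for any stable sets $A,C\in\mathcal G(X)$ and any $x\in X$: $x\in(A\Rightarrow C)$ iff for all $z\in X$, if $x\le z$ and $z\in A$ then $z\in C$.
   Context: A sorted frame (polarity) is a triple $(X,\perp,Y)$ with $X,Y$ nonempty sets and ${\perp}\subseteq X\times Y$. For $U\subseteq X$ let $U'=\{y\in Y:\forall x\in U\ x\perp y\}$, and for $V\subseteq Y$ let ${}'V=\{x\in X:\forall y\in V\ x\perp y\}$. $A\subseteq X$ is stable if $A={}'(A')$; $B\subseteq Y$ co-stable if $B=({}'B)'$. $\mathcal{G}(X)$, $\mathcal{G}(Y)$ are the complete lattices of stable, resp. co-stable, sets. Preorders: $x\le z$ iff $\{x\}'\subseteq\{z\}'$ on $X$; $y\le v$ iff ${}'\{y\}\subseteq{}'\{v\}$ on $Y$; separated means both are partial orders. $\Gamma u$ is the set of elements above $u$. For $T\subseteq Y\times X\times Y$, $T'\subseteq X\times X\times Y$ is $uT'xv$ iff $\forall y\,(yTxv\Rightarrow u\perp y)$. An implicative frame is $(X,\perp,Y,T)$ with: (F0) $x\perp y$ iff $uT'xy$ for all $u\in X$; (F1) separated; (F2) each $\{y: yTxv\}$ equals $\Gamma w$ for some $w\in Y$; (F3) if $yTxv$, $x_1\le x$, $v_1\le v$ then $yTx_1v_1$; (F4) for all $u,x\in X,v\in Y$, $\{x_1:uT'x_1v\}$ is stable and $\{v_1:uT'xv_1\}$ is co-stable. Derived relations: $vR^{\partial11}zx$ iff $xT'zv$; $uR^{111}zx$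 iff $\forall v\in Y(vR^{\partial11}zx\Rightarrow u\perp v)$. Upper bound relation: $uR_\le xz$ iff $x\le u$ and $z\le u$. A Heyting frame is an implicative frame in which $\{u:uR^{111}xz\}=\{u:uR_\le xz\}$ for all $x,z\in X$. Operations: $A\blacktriangleright B=(\{y:\exists x\in A\,\exists v\in B\ yTxv\})''$ for $A\in\mathcal G(X)$, $B\in\mathcal G(Y)$; $A\Rightarrow C={}'(A\blacktriangleright C')$. *)

theory Defs
  imports Main
begin

text \<open>Sorted frames (X, perp, Y): the carriers X and Y are the (nonempty) types 'x and 'y.\<close>

definition rpr :: "('x \<Rightarrow> 'y \<Rightarrow> bool) \<Rightarrow> 'x set \<Rightarrow> 'y set" where
  "rpr perp U = {y. \<forall>x\<in>U. perp x y}"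

definition lpr :: "('x \<Rightarrow> 'y \<Rightarrow> bool) \<Rightarrow> 'y set \<Rightarrow> 'x set" where
  "lpr perp V = {x. \<forall>y\<in>V. perp x y}"

definition stable :: "('x \<Rightarrow> 'y \<Rightarrow> bool) \<Rightarrow> 'x set \<Rightarrow> bool" where
  "stable perp A \<longleftrightarrow> A = lpr perp (rpr perp A)"

definition costable :: "('x \<Rightarrow> 'y \<Rightarrow> bool) \<Rightarrow> 'y set \<Rightarrow> bool" where
  "costable perp B \<longleftrightarrow> B = rpr perp (lpr perp B)"

definition leX :: "('x \<Rightarrow> 'y \<Rightarrow> bool) \<Rightarrow> 'x \<Rightarrow> 'x \<Rightarrow> bool" where
  "leX perp x z \<longleftrightarrow> rpr perp {x} \<subseteq> rpr perp {z}"

definition leY :: "('x \<Rightarrow> 'y \<Rightarrow> bool) \<Rightarrow> 'y \<Rightarrow> 'y \<Rightarrow> bool" where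
  "leY perp y v \<longleftrightarrow> lpr perp {y} \<subseteq> lpr perp {v}"

definition Tp :: "('x \<Rightarrow> 'y \<Rightarrow> bool) \<Rightarrow> ('y \<Rightarrow> 'x \<Rightarrow> 'y \<Rightarrow> bool) \<Rightarrow> 'x \<Rightarrow> 'x \<Rightarrow> 'y \<Rightarrow> bool" where
  "Tp perp T u x v \<longleftrightarrow> (\<forall>y. T y x v \<longrightarrow> perp u y)"

definition implicative_frame :: "('x \<Rightarrow> 'y \<Rightarrow> bool) \<Rightarrow> ('y \<Rightarrow> 'x \<Rightarrow> 'y \<Rightarrow> bool) \<Rightarrow> bool" where
  "implicative_frame perp T \<longleftrightarrow>
     \<comment> \<open>(F0)\<close>
     (\<forall>x y. perp x y \<longleftrightarrow> (\<forall>u. Tp perp T u x y)) \<and>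
     \<comment> \<open>(F1) separated\<close>
     (\<forall>x z. leX perp x z \<and> leX perp z x \<longrightarrow> x = z) \<and>
     (\<forall>y v. leY perp y v \<and> leY perp v y \<longrightarrow> y = v) \<and>
     \<comment> \<open>(F2)\<close>
     (\<forall>x v. \<exists>w. {y. T y x v} = {y. leY perp w y}) \<and>
     \<comment> \<open>(F3)\<close>
     (\<forall>y x v x1 v1. T y x v \<and> leX perp x1 x \<and> leY perp v1 v \<longrightarrow> T y x1 v1) \<and>
     \<comment> \<open>(F4)\<close>
     (\<forall>u x v. stable perp {x1. Tp perp T u x1 v} \<and> costable perp {v1. Tp perp T u x v1})"

definition Rd11 :: "('x \<Rightarrow> 'y \<Rightarrow> bool) \<Rightarrow> ('y \<Rightarrow> 'x \<Rightarrow> 'y \<Rightarrow> bool) \<Rightarrow> 'y \<Rightarrow> 'x \<Rightarrow> 'x \<Rightarrow> bool" where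
  "Rd11 perp T v z x \<longleftrightarrow> Tp perp T x z v"

definition R111 :: "('x \<Rightarrow> 'y \<Rightarrow> bool) \<Rightarrow> ('y \<Rightarrow> 'x \<Rightarrow> 'y \<Rightarrow> bool) \<Rightarrow> 'x \<Rightarrow> 'x \<Rightarrow> 'x \<Rightarrow> bool" where
  "R111 perp T u z x \<longleftrightarrow> (\<forall>v. Rd11 perp T v z x \<longrightarrow> perp u v)"

definition Rle :: "('x \<Rightarrow> 'y \<Rightarrow> bool) \<Rightarrow> 'x \<Rightarrow> 'x \<Rightarrow> 'x \<Rightarrow> bool" where
  "Rle perp u x z \<longleftrightarrow> leX perp x u \<and> leX perp z u"

definition heyting_frame :: "('x \<Rightarrow> 'y \<Rightarrow> bool) \<Rightarrow> ('y \<Rightarrow> 'x \<Rightarrow> 'y \<Rightarrow> bool) \<Rightarrow> bool" where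
  "heyting_frame perp T \<longleftrightarrow> implicative_frame perp T \<and>
     (\<forall>x z. {u. R111 perp T u x z} = {u. Rle perp u x z})"

definition btri :: "('x \<Rightarrow> 'y \<Rightarrow> bool) \<Rightarrow> ('y \<Rightarrow> 'x \<Rightarrow> 'y \<Rightarrow> bool) \<Rightarrow> 'x set \<Rightarrow> 'y set \<Rightarrow> 'y set" where
  "btri perp T A B = rpr perp (lpr perp {y. \<exists>x\<in>A. \<exists>v\<in>B. T y x v})"

definition himp :: "('x \<Rightarrow> 'y \<Rightarrow> bool) \<Rightarrow> ('y \<Rightarrow> 'x \<Rightarrow> 'y \<Rightarrow> bool) \<Rightarrow> 'x set \<Rightarrow> 'x set \<Rightarrow> 'x set" where
  "himp perp T A C = lpr perp (btri perp T A (rpr perp C))"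

end

theory Submission
  imports Defs
begin

text \<open>For fixed x and a, the set W = {v. x T' a v} is co-stable by (F4), and in a Heyting frame its
  left polar is exactly the set of common upper bounds of a and x. Since C is stable, C' \<subseteq> W
  is equivalent to W' \<subseteq> C, so x \<in> A \<Rightarrow> C says that every common upper bound of x and an element
  of A lies in C. Stable sets are upward closed, which reduces this to the elements of A above x.\<close>

lemma lpr_antimono: "V \<subseteq> W \<Longrightarrow> lpr perp W \<subseteq> lpr perp V"
  unfolding lpr_def by blast

lemma rpr_antimono: "U \<subseteq> W \<Longrightarrow> rpr perp W \<subseteq> rpr perp U"
  unfolding rpr_def by blast

lemma rpr_subset_iff_lpr_subset:
  assumes "stable perp C" and "costable perp B"
  shows "rpr perp C \<subseteq> B \<longleftrightarrow> lpr perp B \<subseteq> C"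
proof
  assume "rpr perp C \<subseteq> B"
  then have "lpr perp B \<subseteq> lpr perp (rpr perp C)" by (rule lpr_antimono)
  with assms(1) show "lpr perp B \<subseteq> C" unfolding stable_def by simp
next
  assume "lpr perp B \<subseteq> C"
  then have "rpr perp C \<subseteq> rpr perp (lpr perp B)" by (rule rpr_antimono)
  with assms(2) show "rpr perp C \<subseteq> B" unfolding costable_def by simp
qed

lemma leX_refl [simp]: "leX perp x x"
  unfolding leX_def by simp

lemma stable_upward_closed:
  assumes "stable perp A" and "a \<in> A" and "leX perp a u"
  shows "u \<in> A"
proof -
  have "u \<in> lpr perp (rpr perp A)"
    using assms(2,3) unfolding lpr_def rpr_def leX_def by blast
  with assms(1) show ?thesis unfolding stable_def by simp
qed

lemma mem_himp_iff:
  "x \<in> himp perp T A C \<longleftrightarrow> (\<forall>a\<in>A. rpr perp C \<subseteq> {v. Tp perp T x a v})"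
  unfolding himp_def btri_def Tp_def lpr_def rpr_def by blast

lemma implicative_frame_costable_Tp:
  "implicative_frame perp T \<Longrightarrow> costable perp {v. Tp perp T x a v}"
  unfolding implicative_frame_def by blast

lemma heyting_frame_lpr_Tp:
  assumes "heyting_frame perp T"
  shows "lpr perp {v. Tp perp T x a v} = {u. leX perp a u \<and> leX perp x u}"
proof -
  have "lpr perp {v. Tp perp T x a v} = {u. R111 perp T u a x}"
    unfolding R111_def Rd11_def lpr_def by simp
  also have "\<dots> = {u. Rle perp u a x}"
    using assms unfolding heyting_frame_def by blast
  finally show ?thesis unfolding Rle_def .
qed

theorem proposition3p16:
  fixes perp :: "'x \<Rightarrow> 'y \<Rightarrow> bool" and T :: "'y \<Rightarrow> 'x \<Rightarrow> 'y \<Rightarrow> bool"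
  assumes "heyting_frame perp T"
    and "stable perp A" and "stable perp C"
  shows "x \<in> himp perp T A C \<longleftrightarrow> (\<forall>z. leX perp x z \<and> z \<in> A \<longrightarrow> z \<in> C)"
proof -
  have "implicative_frame perp T"
    using assms(1) unfolding heyting_frame_def by simp
  then have costable: "costable perp {v. Tp perp T x a v}" for a
    by (rule implicative_frame_costable_Tp)
  have "x \<in> himp perp T A C \<longleftrightarrow> (\<forall>a\<in>A. lpr perp {v. Tp perp T x a v} \<subseteq> C)"
    unfolding mem_himp_iff using rpr_subset_iff_lpr_subset[OF assms(3) costable] by simp
  also have "\<dots> \<longleftrightarrow> (\<forall>a\<in>A. \<forall>u. leX perp a u \<and> leX perp x u \<longrightarrow> u \<in> C)"
    unfolding heyting_frame_lpr_Tp[OF assms(1)] by blast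
  also have "\<dots> \<longleftrightarrow> (\<forall>z. leX perp x z \<and> z \<in> A \<longrightarrow> z \<in> C)"
    using stable_upward_closed[OF assms(2)] leX_refl by metis
  finally show ?thesis .
qed

end
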